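(* Let $K$ be a nonempty finite set and $X=\Delta(K)$. If $f,g\in D_0$ and $\lambda\in[0,1]$, then each of the following belongs to $D_0$: - $-f$, - $\max\{f,g\}$, - $\min\{f,g\}$, - $\lambda f+(1-\lambda)g$. Moreover, the linear span of $D_0$ is dense in $\mathcal C(X)$ for the uniform norm.
   Context: $X=\Delta(K)=\{p\in\mathbb R_+^K:\sum_k p^k=1\}$. $D_0$ ("non revealing functions") is the set of functions $f:X\to\mathbb R$ of the following form. There exist: - nonempty finite sets $I,J$, and - matrices $(G^k)_{k\in K}$ in $[-1,1]^{I\times J}$, such that for all $p\in X$, $f(p)=\mathrm{Val}\big(\sum_{k\in K}p^kG^k\big)$. Here $\mathrm{Val}(M)=\max_{x\in\Delta(I)}\min_{y\in\Delta(J)}\sum_{i,j}x(i)y(j)M(i,j)$ is the value of the zero-sum matrix game $M$. *)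

theory Defs
  imports "HOL-Analysis.Analysis"
begin

text \<open>The simplex Delta(K) of probability vectors on the finite index type 'k
  (the index set K is the (nonempty, finite) universe of the type 'k).\<close>
definition simplexK :: "(real ^ 'k::finite) set" where
  "simplexK = {p. (\<forall>k. 0 \<le> p $ k) \<and> (\<Sum>k\<in>UNIV. p $ k) = 1}"

definition mixed :: "nat set \<Rightarrow> (nat \<Rightarrow> real) set" where
  "mixed I = {x. (\<forall>i\<in>I. 0 \<le> x i) \<and> (\<forall>i. i \<notin> I \<longrightarrow> x i = 0) \<and> (\<Sum>i\<in>I. x i) = 1}"

text \<open>Value of the zero-sum matrix game M with row set I and column set J
  (max-min; the max and min are attained, so Sup/Inf coincide with them).\<close>
definition Val :: "nat set \<Rightarrow> nat set \<Rightarrow> (nat \<Rightarrow> nat \<Rightarrow> real) \<Rightarrow> real" where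
  "Val I J M = (SUP x\<in>mixed I. INF y\<in>mixed J. \<Sum>i\<in>I. \<Sum>j\<in>J. x i * y j * M i j)"

text \<open>Non revealing functions D_0 (functions are compared on the simplex only).\<close>
definition D0 :: "(real ^ 'k::finite \<Rightarrow> real) set" where
  "D0 = {f. \<exists>(I::nat set) (J::nat set) (G::'k \<Rightarrow> nat \<Rightarrow> nat \<Rightarrow> real).
            finite I \<and> I \<noteq> {} \<and> finite J \<and> J \<noteq> {} \<and>
            (\<forall>k i j. \<bar>G k i j\<bar> \<le> 1) \<and>
            (\<forall>p\<in>simplexK. f p = Val I J (\<lambda>i j. \<Sum>k\<in>UNIV. p $ k * G k i j))}"

definition lin_span :: "('a \<Rightarrow> real) set \<Rightarrow> ('a \<Rightarrow> real) set" where
  "lin_span S = {h. \<exists>(n::nat) (c::nat \<Rightarrow> real) (fs::nat \<Rightarrow> 'a \<Rightarrow> real).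
                    (\<forall>i<n. fs i \<in> S) \<and> h = (\<lambda>p. \<Sum>i<n. c i * fs i p)}"

end

theory Submission
  imports Defs "HOL-Library.Nat_Bijection"
begin

(* The closure properties come from three constructions on matrix games, each computing
   the value of the new game from the values of the old ones:
   - negating and transposing the matrix negates the value;
   - letting the row player choose which of two games to play, against a column player who
     answers in both games at once, gives the maximum of the two values;
   - playing both games independently and averaging the payoffs with weights lam and
     1 - lam gives the corresponding average of the values.
   To compute these values we use the minimax theorem (Val is also the infimum of what the
   column player can hold the row player to), which is proved first by an elementary
   potential argument; with it, a value is determined by approximately optimal strategies
   of both players (Val_eqI).  Since the constructions act entrywise on the matrices
   sum_k p_k G^k, they turn non revealing functions into non revealing functions; min
   follows from max and negation.
   For density, positive multiples of non revealing functions form a lattice of continuous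
   functions on the compact simplex containing every linear function, hence interpolating
   any two values at any two points; a lattice version of the Stone-Weierstrass theorem,
   proved here for general compact spaces, shows that such a lattice is uniformly dense. *)

section \<open>Mixed strategies\<close>

lemma mixed_outside: "x \<in> mixed I \<Longrightarrow> i \<notin> I \<Longrightarrow> x i = 0"
  and mixed_sum: "x \<in> mixed I \<Longrightarrow> (\<Sum>i\<in>I. x i) = 1"
  by (auto simp: mixed_def)

lemma mixed_nonneg: "x \<in> mixed I \<Longrightarrow> 0 \<le> x i"
  by (cases "i \<in> I") (auto simp: mixed_def)

definition pure :: "nat \<Rightarrow> nat \<Rightarrow> real" where
  "pure i0 i = (if i = i0 then 1 else 0)"

lemma pure_mixed: "finite I \<Longrightarrow> i0 \<in> I \<Longrightarrow> pure i0 \<in> mixed I"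
  by (auto simp: mixed_def pure_def)

lemma mixed_nonempty: "finite I \<Longrightarrow> I \<noteq> {} \<Longrightarrow> mixed I \<noteq> {}"
  using pure_mixed by blast

lemma sum_pure: "(\<Sum>i\<in>I. pure i0 i * c i) = (c i0 :: real)" if "finite I" "i0 \<in> I"
proof -
  have "(\<Sum>i\<in>I. pure i0 i * c i) = (\<Sum>i\<in>I. if i = i0 then c i else 0)"
    by (rule sum.cong) (auto simp: pure_def)
  then show ?thesis using that by simp
qed

lemma mixed_average_const: "x \<in> mixed I \<Longrightarrow> (\<Sum>i\<in>I. x i * c) = (c :: real)"
  using mixed_sum by (simp add: sum_distrib_right[symmetric])

lemma mixed_average_ge_Min:
  assumes "x \<in> mixed I" "finite I" "I \<noteq> {}"
  shows "Min (c ` I) \<le> (\<Sum>i\<in>I. x i * c i)"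
proof -
  have "(\<Sum>i\<in>I. x i * Min (c ` I)) \<le> (\<Sum>i\<in>I. x i * c i)"
    by (rule sum_mono) (use assms mixed_nonneg in \<open>auto intro: mult_left_mono\<close>)
  then show ?thesis using mixed_average_const[OF assms(1)] by simp
qed

lemma mixed_average_le_Max:
  assumes "x \<in> mixed I" "finite I" "I \<noteq> {}"
  shows "(\<Sum>i\<in>I. x i * c i) \<le> Max (c ` I)"
proof -
  have "(\<Sum>i\<in>I. x i * c i) \<le> (\<Sum>i\<in>I. x i * Max (c ` I))"
    by (rule sum_mono) (use assms mixed_nonneg in \<open>auto intro: mult_left_mono\<close>)
  then show ?thesis using mixed_average_const[OF assms(1)] by simp
qed

lemma mixed_average_abs_le:
  assumes "x \<in> mixed I" "\<And>i. i \<in> I \<Longrightarrow> \<bar>c i\<bar> \<le> B"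
  shows "\<bar>\<Sum>i\<in>I. x i * c i\<bar> \<le> B"
proof -
  have "\<bar>\<Sum>i\<in>I. x i * c i\<bar> \<le> (\<Sum>i\<in>I. x i * B)"
    by (rule order_trans[OF sum_abs sum_mono])
       (use assms mixed_nonneg in \<open>auto simp: abs_mult intro: mult_left_mono\<close>)
  then show ?thesis using mixed_average_const[OF assms(1)] by simp
qed

lemma INF_mixed_average:
  assumes "finite J" "J \<noteq> {}"
  shows "(INF y\<in>mixed J. \<Sum>j\<in>J. y j * c j) = Min (c ` J)"
proof (rule antisym)
  have "Min (c ` J) \<in> c ` J" using assms by (intro Min_in) auto
  then obtain j0 where j0: "j0 \<in> J" "c j0 = Min (c ` J)" by (metis imageE)
  have "bdd_below ((\<lambda>y. \<Sum>j\<in>J. y j * c j) ` mixed J)"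
    using mixed_average_ge_Min assms by (intro bdd_belowI2) blast
  then show "(INF y\<in>mixed J. \<Sum>j\<in>J. y j * c j) \<le> Min (c ` J)"
    by (rule cINF_lower2[OF _ pure_mixed[OF assms(1) j0(1)]]) (simp add: sum_pure assms j0)
  show "Min (c ` J) \<le> (INF y\<in>mixed J. \<Sum>j\<in>J. y j * c j)"
    by (rule cINF_greatest) (use mixed_average_ge_Min assms mixed_nonempty in auto)
qed

definition col_payoff :: "nat set \<Rightarrow> (nat \<Rightarrow> nat \<Rightarrow> real) \<Rightarrow> (nat \<Rightarrow> real) \<Rightarrow> nat \<Rightarrow> real" where
  "col_payoff I M x j = (\<Sum>i\<in>I. x i * M i j)"

definition row_payoff :: "nat set \<Rightarrow> (nat \<Rightarrow> nat \<Rightarrow> real) \<Rightarrow> (nat \<Rightarrow> real) \<Rightarrow> nat \<Rightarrow> real" where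
  "row_payoff J M y i = (\<Sum>j\<in>J. y j * M i j)"

definition row_guarantee :: "nat set \<Rightarrow> nat set \<Rightarrow> (nat \<Rightarrow> nat \<Rightarrow> real) \<Rightarrow> (nat \<Rightarrow> real) \<Rightarrow> real" where
  "row_guarantee I J M x = Min (col_payoff I M x ` J)"

definition col_guarantee :: "nat set \<Rightarrow> nat set \<Rightarrow> (nat \<Rightarrow> nat \<Rightarrow> real) \<Rightarrow> (nat \<Rightarrow> real) \<Rightarrow> real" where
  "col_guarantee I J M y = Max (row_payoff J M y ` I)"

lemma row_guarantee_le: "finite J \<Longrightarrow> j \<in> J \<Longrightarrow> row_guarantee I J M x \<le> col_payoff I M x j"
  by (simp add: row_guarantee_def)

lemma row_guarantee_geI:
  "finite J \<Longrightarrow> J \<noteq> {} \<Longrightarrow> (\<And>j. j \<in> J \<Longrightarrow> a \<le> col_payoff I M x j) \<Longrightarrow> a \<le> row_guarantee I J M x"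
  by (simp add: row_guarantee_def)

lemma col_guarantee_ge: "finite I \<Longrightarrow> i \<in> I \<Longrightarrow> row_payoff J M y i \<le> col_guarantee I J M y"
  by (simp add: col_guarantee_def)

lemma col_guarantee_leI:
  "finite I \<Longrightarrow> I \<noteq> {} \<Longrightarrow> (\<And>i. i \<in> I \<Longrightarrow> row_payoff J M y i \<le> a) \<Longrightarrow> col_guarantee I J M y \<le> a"
  by (simp add: col_guarantee_def)

lemma payoff_by_cols: "(\<Sum>i\<in>I. \<Sum>j\<in>J. x i * y j * M i j) = (\<Sum>j\<in>J. y j * col_payoff I M x j)"
  unfolding col_payoff_def sum_distrib_left
  by (subst sum.swap) (simp add: mult_ac)

lemma payoff_by_rows: "(\<Sum>i\<in>I. \<Sum>j\<in>J. x i * y j * M i j) = (\<Sum>i\<in>I. x i * row_payoff J M y i)"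
  unfolding row_payoff_def sum_distrib_left by (simp add: mult_ac)

lemma Val_eq_SUP_row_guarantee:
  assumes "finite J" "J \<noteq> {}"
  shows "Val I J M = (SUP x\<in>mixed I. row_guarantee I J M x)"
  unfolding Val_def payoff_by_cols row_guarantee_def
  by (simp add: INF_mixed_average[OF assms])

lemma row_guarantee_le_col_guarantee:
  assumes "finite I" "I \<noteq> {}" "finite J" "J \<noteq> {}" "x \<in> mixed I" "y \<in> mixed J"
  shows "row_guarantee I J M x \<le> col_guarantee I J M y"
proof -
  have "row_guarantee I J M x \<le> (\<Sum>j\<in>J. y j * col_payoff I M x j)"
    unfolding row_guarantee_def by (rule mixed_average_ge_Min) (use assms in auto)
  also have "\<dots> = (\<Sum>i\<in>I. x i * row_payoff J M y i)"
    by (metis payoff_by_cols payoff_by_rows)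
  also have "\<dots> \<le> col_guarantee I J M y"
    unfolding col_guarantee_def by (rule mixed_average_le_Max) (use assms in auto)
  finally show ?thesis .
qed

lemma bdd_above_row_guarantee:
  "finite I \<Longrightarrow> I \<noteq> {} \<Longrightarrow> finite J \<Longrightarrow> J \<noteq> {} \<Longrightarrow> bdd_above (row_guarantee I J M ` mixed I)"
  using mixed_nonempty[of J] row_guarantee_le_col_guarantee by (metis bdd_aboveI2 ex_in_conv)

lemma bdd_below_col_guarantee:
  "finite I \<Longrightarrow> I \<noteq> {} \<Longrightarrow> finite J \<Longrightarrow> J \<noteq> {} \<Longrightarrow> bdd_below (col_guarantee I J M ` mixed J)"
  using mixed_nonempty[of I] row_guarantee_le_col_guarantee by (metis bdd_belowI2 ex_in_conv)

section \<open>The minimax theorem\<close>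

lemma max0_square_le: "(max 0 (a + h))^2 \<le> (max 0 a)^2 + 2 * max 0 a * h + h^2" for a h :: real
proof (cases "a \<le> 0")
  case True
  show ?thesis
  proof (cases "a + h \<le> 0")
    case False
    then have "(a + h)^2 \<le> h^2" using True by (intro power_mono) auto
    then show ?thesis using True False by simp
  qed (use True in auto)
next
  case False
  have "(max 0 (a + h))^2 \<le> (a + h)^2" by (cases "a + h \<le> 0") auto
  then show ?thesis using False by (simp add: power2_sum)
qed

text \<open>The squared excess of the rows over the level c against the column strategy y.
  It is nonnegative, and is small exactly when y holds every row close to c or below.\<close>

definition excess :: "nat set \<Rightarrow> nat set \<Rightarrow> (nat \<Rightarrow> nat \<Rightarrow> real) \<Rightarrow> real \<Rightarrow> (nat \<Rightarrow> real) \<Rightarrow> real" where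
  "excess I J M c y = (\<Sum>i\<in>I. (max 0 (row_payoff J M y i - c))^2)"

lemma excess_ge:
  assumes "finite I" "I \<noteq> {}" "c \<le> col_guarantee I J M y"
  shows "(col_guarantee I J M y - c)^2 \<le> excess I J M c y"
proof -
  have "col_guarantee I J M y \<in> row_payoff J M y ` I"
    unfolding col_guarantee_def using assms by (intro Max_in) auto
  then obtain i where i: "i \<in> I" "col_guarantee I J M y = row_payoff J M y i" by blast
  have "(col_guarantee I J M y - c)^2 = (max 0 (row_payoff J M y i - c))^2"
    using i assms(3) by simp
  also have "\<dots> \<le> excess I J M c y"
    unfolding excess_def by (rule member_le_sum) (use i assms in auto)
  finally show ?thesis .
qed

definition toward :: "(nat \<Rightarrow> real) \<Rightarrow> real \<Rightarrow> nat \<Rightarrow> nat \<Rightarrow> real" where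
  "toward y t j j' = (1 - t) * y j' + t * pure j j'"

lemma toward_mixed:
  assumes "y \<in> mixed J" "finite J" "j \<in> J" "0 \<le> t" "t \<le> 1"
  shows "toward y t j \<in> mixed J"
proof -
  have p: "pure j \<in> mixed J" using assms by (intro pure_mixed)
  show ?thesis unfolding mixed_def toward_def
  proof (intro CollectI conjI ballI allI impI)
    fix i assume "i \<in> J"
    then show "0 \<le> (1 - t) * y i + t * pure j i"
      using mixed_nonneg[OF assms(1)] mixed_nonneg[OF p] assms(4,5) by simp
  next
    fix i assume "i \<notin> J"
    then show "(1 - t) * y i + t * pure j i = 0"
      using mixed_outside[OF assms(1)] mixed_outside[OF p] by simp
  next
    show "(\<Sum>i\<in>J. (1 - t) * y i + t * pure j i) = 1"
      using mixed_sum[OF assms(1)] mixed_sum[OF p] by (simp add: sum.distrib sum_distrib_left[symmetric])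
  qed
qed

lemma row_payoff_toward:
  assumes "finite J" "j \<in> J"
  shows "row_payoff J M (toward y t j) i = (1 - t) * row_payoff J M y i + t * M i j"
proof -
  have "row_payoff J M (toward y t j) i = (\<Sum>j'\<in>J. (1 - t) * (y j' * M i j') + t * (pure j j' * M i j'))"
    unfolding row_payoff_def toward_def by (rule sum.cong) (auto simp: algebra_simps)
  then show ?thesis
    by (simp add: row_payoff_def sum.distrib sum_distrib_left[symmetric] sum_pure[OF assms])
qed

lemma excess_toward:
  fixes M :: "nat \<Rightarrow> nat \<Rightarrow> real" and y :: "nat \<Rightarrow> real"
  assumes "finite J" "j \<in> J"
  defines "d \<equiv> \<lambda>i. M i j - row_payoff J M y i"
  shows "excess I J M c (toward y t j) \<le> excess I J M c y
           + 2 * t * (\<Sum>i\<in>I. max 0 (row_payoff J M y i - c) * d i) + t^2 * (\<Sum>i\<in>I. (d i)^2)"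
proof -
  have shift: "row_payoff J M (toward y t j) i - c = (row_payoff J M y i - c) + t * d i" for i
    unfolding row_payoff_toward[OF assms(1,2)] d_def by (simp add: algebra_simps)
  have "excess I J M c (toward y t j) \<le> (\<Sum>i\<in>I. (max 0 (row_payoff J M y i - c))^2
      + 2 * max 0 (row_payoff J M y i - c) * (t * d i) + (t * d i)^2)"
    unfolding excess_def by (intro sum_mono) (metis shift max0_square_le)
  also have "\<dots> = excess I J M c y + 2 * t * (\<Sum>i\<in>I. max 0 (row_payoff J M y i - c) * d i)
      + t^2 * (\<Sum>i\<in>I. (d i)^2)"
    unfolding excess_def by (simp add: sum.distrib sum_distrib_left power_mult_distrib mult_ac)
  finally show ?thesis .
qed

text \<open>First order condition at an approximate minimiser of the excess: moving towards any
  pure column does not decrease the excess by much.\<close>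

lemma excess_near_min_direction:
  assumes "finite J" "j \<in> J" "y \<in> mixed J" "0 < t" "t \<le> 1"
    and near_min: "\<And>z. z \<in> mixed J \<Longrightarrow> excess I J M c y < excess I J M c z + t^2"
    and bound: "\<And>i. i \<in> I \<Longrightarrow> (M i j - row_payoff J M y i)^2 \<le> D"
  shows "- t * (1 + real (card I) * D)
           < 2 * (\<Sum>i\<in>I. max 0 (row_payoff J M y i - c) * (M i j - row_payoff J M y i))"
    (is "_ < 2 * ?S")
proof -
  have "(\<Sum>i\<in>I. (M i j - row_payoff J M y i)^2) \<le> real (card I) * D"
    using sum_mono[of I _ "\<lambda>_. D", OF bound] by simp
  then have "t^2 * (\<Sum>i\<in>I. (M i j - row_payoff J M y i)^2) \<le> t^2 * (real (card I) * D)"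
    by (intro mult_left_mono) auto
  moreover have "excess I J M c y < excess I J M c (toward y t j) + t^2"
    using assms by (intro near_min toward_mixed) auto
  ultimately have "excess I J M c y < excess I J M c y + 2 * t * ?S + t^2 * (real (card I) * D) + t^2"
    using excess_toward[OF assms(1,2), where I=I and c=c and t=t and M=M and y=y] by linarith
  then have "0 < t * (2 * ?S + t * (1 + real (card I) * D))"
    by (simp add: algebra_simps power2_eq_square)
  then show ?thesis using assms(4) by (simp add: zero_less_mult_iff)
qed

lemma row_guarantee_from_weights:
  assumes "finite I" "finite J" "J \<noteq> {}" "\<And>i. 0 \<le> w i" "0 < (\<Sum>i\<in>I. w i)"
    and beats: "\<And>j. j \<in> J \<Longrightarrow> c * (\<Sum>i\<in>I. w i) < (\<Sum>i\<in>I. w i * M i j)"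
  shows "\<exists>x\<in>mixed I. c < row_guarantee I J M x"
proof -
  define W where "W = (\<Sum>i\<in>I. w i)"
  define x where "x i = (if i \<in> I then w i / W else 0)" for i
  have "x \<in> mixed I"
    unfolding mixed_def x_def W_def using assms(4,5) by (auto simp: sum_divide_distrib[symmetric])
  moreover have "c < col_payoff I M x j" if "j \<in> J" for j
  proof -
    have "col_payoff I M x j = (\<Sum>i\<in>I. w i * M i j) / W"
      unfolding col_payoff_def x_def sum_divide_distrib by (rule sum.cong) auto
    then show ?thesis
      using beats[OF that] assms(5) by (simp add: W_def pos_less_divide_eq mult.commute)
  qed
  then have "c < row_guarantee I J M x" unfolding row_guarantee_def using assms(2,3) by simp
  ultimately show ?thesis by blast
qed

lemma deviation_from_row_payoff_le:
  assumes y: "y \<in> mixed J" and j: "j \<in> J" and B: "\<And>j'. j' \<in> J \<Longrightarrow> \<bar>M i j'\<bar> \<le> B"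
  shows "(M i j - row_payoff J M y i)^2 \<le> 4 * B^2"
proof -
  have "\<bar>row_payoff J M y i\<bar> \<le> B"
    unfolding row_payoff_def by (rule mixed_average_abs_le[OF y B])
  then have "\<bar>M i j - row_payoff J M y i\<bar> \<le> 2 * B" using B[OF j] by linarith
  then have "(M i j - row_payoff J M y i)^2 \<le> (2 * B)^2"
    by (metis abs_ge_zero power2_abs power_mono)
  then show ?thesis by (simp add: power_mult_distrib)
qed

lemma exists_near_INF:
  fixes f :: "'a \<Rightarrow> real"
  assumes "A \<noteq> {}" "bdd_below (f ` A)" "0 < s"
  obtains y where "y \<in> A" "\<And>z. z \<in> A \<Longrightarrow> f y < f z + s"
proof -
  have "(INF z\<in>A. f z) < (INF z\<in>A. f z) + s" using assms(3) by simp
  then obtain y where "y \<in> A" "f y < (INF z\<in>A. f z) + s"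
    using cINF_less_iff[OF assms(1,2)] by blast
  moreover have "(INF z\<in>A. f z) \<le> f z" if "z \<in> A" for z by (rule cINF_lower[OF assms(2) that])
  ultimately show ?thesis using that by force
qed

text \<open>If every column strategy concedes more than c, take
  an approximate minimiser y of the excess over c.  By the first order condition above, the
  positive parts w of the excesses of the rows against y beat the level c against every
  pure column, so their normalisation secures more than c.\<close>

lemma minimax_strict:
  assumes I: "finite I" "I \<noteq> {}" and J: "finite J" "J \<noteq> {}"
    and c: "c < (INF y\<in>mixed J. col_guarantee I J M y)"
  shows "\<exists>x\<in>mixed I. c < row_guarantee I J M x"
proof -
  define \<delta> where "\<delta> = ((INF y\<in>mixed J. col_guarantee I J M y) - c)^2"
  have \<delta>: "0 < \<delta>" using c by (simp add: \<delta>_def)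
  have excess_ge_\<delta>: "\<delta> \<le> excess I J M c y" if y: "y \<in> mixed J" for y
  proof -
    have v: "(INF y\<in>mixed J. col_guarantee I J M y) \<le> col_guarantee I J M y"
      by (rule cINF_lower[OF bdd_below_col_guarantee[OF I J] y])
    then have "\<delta> \<le> (col_guarantee I J M y - c)^2"
      unfolding \<delta>_def using c by (intro power_mono) auto
    also have "\<dots> \<le> excess I J M c y" by (rule excess_ge[OF I]) (use v c in auto)
    finally show ?thesis .
  qed
  define B where "B = Max ((\<lambda>(i, j). \<bar>M i j\<bar>) ` (I \<times> J))"
  have B: "\<bar>M i j\<bar> \<le> B" if "i \<in> I" "j \<in> J" for i j
    unfolding B_def using I(1) J(1) that by (intro Max_ge) (auto intro: image_eqI[where x="(i, j)"])
  define D where "D = 4 * B^2"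
  define t where "t = min 1 (\<delta> / (1 + real (card I) * D))"
  have pos: "0 < 1 + real (card I) * D" by (simp add: D_def add_pos_nonneg)
  have "t \<le> \<delta> / (1 + real (card I) * D)" by (simp add: t_def)
  then have t_small: "t * (1 + real (card I) * D) \<le> \<delta>" using pos by (simp add: pos_le_divide_eq)
  have t: "0 < t" "t \<le> 1" using \<delta> pos by (auto simp: t_def)
  have "bdd_below (excess I J M c ` mixed J)"
    by (rule bdd_belowI2[where m=0]) (auto simp: excess_def intro: sum_nonneg)
  then obtain y where y: "y \<in> mixed J"
    and near: "\<And>z. z \<in> mixed J \<Longrightarrow> excess I J M c y < excess I J M c z + t^2"
    using exists_near_INF[OF mixed_nonempty[OF J]] t by (metis zero_less_power)
  define w where "w i = max 0 (row_payoff J M y i - c)" for i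
  have payoff_w: "(\<Sum>i\<in>I. w i * row_payoff J M y i) = excess I J M c y + c * (\<Sum>i\<in>I. w i)"
    unfolding excess_def sum_distrib_left sum.distrib[symmetric]
    by (rule sum.cong) (auto simp: w_def power2_eq_square algebra_simps max_def)
  have "0 < (\<Sum>i\<in>I. w i)"
  proof (rule ccontr)
    have w: "0 \<le> w i" for i by (simp add: w_def)
    assume "\<not> 0 < (\<Sum>i\<in>I. w i)"
    then have "(\<Sum>i\<in>I. w i) = 0" using w by (simp add: sum_nonneg order.antisym)
    then have "\<forall>i\<in>I. w i = 0" using w I(1) by (simp add: sum_nonneg_eq_0_iff)
    then have "excess I J M c y = 0" by (simp add: excess_def w_def[symmetric])
    then show False using excess_ge_\<delta>[OF y] \<delta> by simp
  qed
  moreover have "c * (\<Sum>i\<in>I. w i) < (\<Sum>i\<in>I. w i * M i j)" if j: "j \<in> J" for j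
  proof -
    have bound: "(M i j - row_payoff J M y i)^2 \<le> D" if "i \<in> I" for i
      unfolding D_def by (rule deviation_from_row_payoff_le[OF y j]) (use B that in auto)
    have "- (t * (1 + real (card I) * D)) < 2 * (\<Sum>i\<in>I. w i * (M i j - row_payoff J M y i))"
      unfolding w_def using excess_near_min_direction[OF J(1) j y t near bound] by simp
    moreover have "(\<Sum>i\<in>I. w i * (M i j - row_payoff J M y i))
        = (\<Sum>i\<in>I. w i * M i j) - (excess I J M c y + c * (\<Sum>i\<in>I. w i))"
      using payoff_w by (simp add: algebra_simps sum_subtractf)
    ultimately show ?thesis using t_small excess_ge_\<delta>[OF y] \<delta> by linarith
  qed
  ultimately show ?thesis by (intro row_guarantee_from_weights[OF I(1) J]) (auto simp: w_def)
qed

theorem Val_eq_INF_col_guarantee: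
  assumes I: "finite I" "I \<noteq> {}" and J: "finite J" "J \<noteq> {}"
  shows "Val I J M = (INF y\<in>mixed J. col_guarantee I J M y)"
proof (rule antisym)
  show "Val I J M \<le> (INF y\<in>mixed J. col_guarantee I J M y)"
    unfolding Val_eq_SUP_row_guarantee[OF J]
    by (intro cSUP_least cINF_greatest mixed_nonempty row_guarantee_le_col_guarantee I J)
  show "(INF y\<in>mixed J. col_guarantee I J M y) \<le> Val I J M"
  proof (rule ccontr)
    assume "\<not> ?thesis"
    then obtain x where x: "x \<in> mixed I" "Val I J M < row_guarantee I J M x"
      using minimax_strict[OF I J] by (meson not_le)
    have "row_guarantee I J M x \<le> Val I J M"
      unfolding Val_eq_SUP_row_guarantee[OF J]
      by (rule cSUP_upper[OF x(1) bdd_above_row_guarantee[OF I J]])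
    then show False using x(2) by simp
  qed
qed

lemma row_guarantee_le_Val:
  assumes "finite I" "I \<noteq> {}" "finite J" "J \<noteq> {}" "x \<in> mixed I"
  shows "row_guarantee I J M x \<le> Val I J M"
  unfolding Val_eq_SUP_row_guarantee[OF assms(3,4)]
  by (rule cSUP_upper[OF assms(5) bdd_above_row_guarantee[OF assms(1-4)]])

lemma Val_le_col_guarantee:
  assumes "finite I" "I \<noteq> {}" "finite J" "J \<noteq> {}" "y \<in> mixed J"
  shows "Val I J M \<le> col_guarantee I J M y"
  unfolding Val_eq_INF_col_guarantee[OF assms(1-4)]
  by (rule cINF_lower[OF bdd_below_col_guarantee[OF assms(1-4)] assms(5)])

lemma Val_approx_row:
  assumes "finite I" "I \<noteq> {}" "finite J" "J \<noteq> {}" "0 < e"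
  obtains x where "x \<in> mixed I" "Val I J M - e < row_guarantee I J M x"
proof -
  have "Val I J M - e < (SUP x\<in>mixed I. row_guarantee I J M x)"
    using assms(5) Val_eq_SUP_row_guarantee[OF assms(3,4)] by simp
  then show ?thesis
    using that less_cSUP_iff[OF mixed_nonempty[OF assms(1,2)] bdd_above_row_guarantee[OF assms(1-4)]]
    by blast
qed

lemma Val_approx_col:
  assumes "finite I" "I \<noteq> {}" "finite J" "J \<noteq> {}" "0 < e"
  obtains y where "y \<in> mixed J" "col_guarantee I J M y < Val I J M + e"
proof -
  have "(INF y\<in>mixed J. col_guarantee I J M y) < Val I J M + e"
    using assms(5) Val_eq_INF_col_guarantee[OF assms(1-4)] by simp
  then show ?thesis
    using that cINF_less_iff[OF mixed_nonempty[OF assms(3,4)] bdd_below_col_guarantee[OF assms(1-4)]]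
    by blast
qed

lemma Val_eqI:
  assumes "finite I" "I \<noteq> {}" "finite J" "J \<noteq> {}"
    and row: "\<And>e. 0 < e \<Longrightarrow> \<exists>x\<in>mixed I. v - e \<le> row_guarantee I J M x"
    and col: "\<And>e. 0 < e \<Longrightarrow> \<exists>y\<in>mixed J. col_guarantee I J M y \<le> v + e"
  shows "Val I J M = v"
proof (rule antisym)
  show "Val I J M \<le> v"
  proof (rule field_le_epsilon)
    fix e :: real assume "0 < e"
    then obtain y where "y \<in> mixed J" "col_guarantee I J M y \<le> v + e" using col by blast
    then show "Val I J M \<le> v + e" using Val_le_col_guarantee[OF assms(1-4), of y M] by linarith
  qed
  show "v \<le> Val I J M"
  proof (rule field_le_epsilon)
    fix e :: real assume "0 < e"
    then obtain x where "x \<in> mixed I" "v - e \<le> row_guarantee I J M x" using row by blast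
    then show "v \<le> Val I J M + e" using row_guarantee_le_Val[OF assms(1-4), of x M] by linarith
  qed
qed

lemma row_guarantee_neg_transpose:
  assumes "finite I" "I \<noteq> {}"
  shows "row_guarantee J I (\<lambda>j i. - M i j) y = - col_guarantee I J M y"
proof -
  have "col_payoff J (\<lambda>j i. - M i j) y = (\<lambda>i. - row_payoff J M y i)"
    by (intro ext) (simp add: col_payoff_def row_payoff_def sum_negf)
  then show ?thesis
    using assms by (simp add: row_guarantee_def col_guarantee_def image_image)
qed

lemma col_guarantee_neg_transpose:
  assumes "finite J" "J \<noteq> {}"
  shows "col_guarantee J I (\<lambda>j i. - M i j) x = - row_guarantee I J M x"
proof -
  have "row_payoff I (\<lambda>j i. - M i j) x = (\<lambda>j. - col_payoff I M x j)"
    by (intro ext) (simp add: col_payoff_def row_payoff_def sum_negf)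
  then show ?thesis
    using assms by (simp add: row_guarantee_def col_guarantee_def image_image)
qed

lemma Val_neg_transpose:
  assumes I: "finite I" "I \<noteq> {}" and J: "finite J" "J \<noteq> {}"
  shows "Val J I (\<lambda>j i. - M i j) = - Val I J M"
proof (rule Val_eqI[OF J I])
  fix e :: real assume e: "0 < e"
  obtain y where "y \<in> mixed J" "col_guarantee I J M y < Val I J M + e"
    using Val_approx_col[OF I J e] .
  then show "\<exists>y\<in>mixed J. - Val I J M - e \<le> row_guarantee J I (\<lambda>j i. - M i j) y"
    by (intro bexI[of _ y]) (auto simp: row_guarantee_neg_transpose[OF I])
  obtain x where "x \<in> mixed I" "Val I J M - e < row_guarantee I J M x"
    using Val_approx_row[OF I J e] .
  then show "\<exists>x\<in>mixed I. col_guarantee J I (\<lambda>j i. - M i j) x \<le> - Val I J M + e"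
    by (intro bexI[of _ x]) (auto simp: col_guarantee_neg_transpose[OF J])
qed

section \<open>Combining two games\<close>

text \<open>Natural-number encodings of the disjoint union and of the product of two index sets,
  and the corresponding embeddings of mixed strategies.\<close>

definition tagged_union :: "nat set \<Rightarrow> nat set \<Rightarrow> nat set" where
  "tagged_union A B = (\<lambda>i. 2 * i) ` A \<union> (\<lambda>i. 2 * i + 1) ` B"

definition pair_set :: "nat set \<Rightarrow> nat set \<Rightarrow> nat set" where
  "pair_set A B = prod_encode ` (A \<times> B)"

definition tag_left :: "(nat \<Rightarrow> real) \<Rightarrow> nat \<Rightarrow> real" where
  "tag_left x a = (if even a then x (a div 2) else 0)"

definition tag_right :: "(nat \<Rightarrow> real) \<Rightarrow> nat \<Rightarrow> real" where
  "tag_right x a = (if odd a then x (a div 2) else 0)"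

definition product_mix :: "nat set \<Rightarrow> nat set \<Rightarrow> (nat \<Rightarrow> real) \<Rightarrow> (nat \<Rightarrow> real) \<Rightarrow> nat \<Rightarrow> real" where
  "product_mix A B x z a =
     (if a \<in> pair_set A B then x (fst (prod_decode a)) * z (snd (prod_decode a)) else 0)"

lemma finite_tagged_union: "finite A \<Longrightarrow> finite B \<Longrightarrow> finite (tagged_union A B)"
  and tagged_union_nonempty: "A \<noteq> {} \<Longrightarrow> tagged_union A B \<noteq> {}"
  and finite_pair_set: "finite A \<Longrightarrow> finite B \<Longrightarrow> finite (pair_set A B)"
  and pair_set_nonempty: "A \<noteq> {} \<Longrightarrow> B \<noteq> {} \<Longrightarrow> pair_set A B \<noteq> {}"
  by (auto simp: tagged_union_def pair_set_def)

lemma pair_set_encode: "i \<in> A \<Longrightarrow> j \<in> B \<Longrightarrow> prod_encode (i, j) \<in> pair_set A B"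
  by (simp add: pair_set_def)

lemma pair_setE:
  assumes "a \<in> pair_set A B"
  obtains i j where "i \<in> A" "j \<in> B" "a = prod_encode (i, j)"
  using assms by (auto simp: pair_set_def)

lemma sum_tagged_union:
  assumes "finite A" "finite B"
  shows "(\<Sum>a\<in>tagged_union A B. h a) = (\<Sum>i\<in>A. h (2 * i)) + (\<Sum>i\<in>B. h (2 * i + 1))"
proof -
  have disjoint: "(\<lambda>i::nat. 2 * i) ` A \<inter> (\<lambda>i. 2 * i + 1) ` B = {}" by auto presburger
  have "(\<Sum>a\<in>tagged_union A B. h a) = (\<Sum>a\<in>(\<lambda>i. 2 * i) ` A. h a) + (\<Sum>a\<in>(\<lambda>i. 2 * i + 1) ` B. h a)"
    unfolding tagged_union_def by (rule sum.union_disjoint) (use assms disjoint in auto)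
  then show ?thesis by (simp add: sum.reindex inj_on_def)
qed

lemma sum_pair_set:
  assumes "finite A" "finite B"
  shows "(\<Sum>a\<in>pair_set A B. h a) = (\<Sum>i\<in>A. \<Sum>j\<in>B. h (prod_encode (i, j)))"
  unfolding pair_set_def
  by (simp add: sum.reindex inj_prod_encode sum.cartesian_product split_def)

lemma product_mix_encode:
  "i \<in> A \<Longrightarrow> j \<in> B \<Longrightarrow> product_mix A B x z (prod_encode (i, j)) = x i * z j"
  by (simp add: product_mix_def pair_set_encode)

lemma product_mix_mixed:
  assumes "finite A" "finite B" "x \<in> mixed A" "z \<in> mixed B"
  shows "product_mix A B x z \<in> mixed (pair_set A B)"
proof -
  have "(\<Sum>a\<in>pair_set A B. product_mix A B x z a) = (\<Sum>i\<in>A. x i) * (\<Sum>j\<in>B. z j)"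
    unfolding sum_pair_set[OF assms(1,2)] sum_product
    by (intro sum.cong refl) (simp add: product_mix_encode)
  then show ?thesis
    unfolding mixed_def using mixed_sum[OF assms(3)] mixed_sum[OF assms(4)]
      mixed_nonneg[OF assms(3)] mixed_nonneg[OF assms(4)]
    by (auto simp: product_mix_def)
qed

lemma tag_left_mixed:
  assumes "finite A" "finite B" "x \<in> mixed A"
  shows "tag_left x \<in> mixed (tagged_union A B)"
proof -
  have "tag_left x a = 0" if "a \<notin> tagged_union A B" for a
  proof (cases "even a")
    case True
    then have "a = 2 * (a div 2)" by simp
    then have "a div 2 \<notin> A" using that unfolding tagged_union_def by (metis UnI1 imageI)
    then show ?thesis using mixed_outside[OF assms(3)] by (simp add: tag_left_def)
  qed (simp add: tag_left_def)
  moreover have "(\<Sum>a\<in>tagged_union A B. tag_left x a) = 1"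
    using mixed_sum[OF assms(3)] by (simp add: sum_tagged_union[OF assms(1,2)] tag_left_def)
  ultimately show ?thesis
    unfolding mixed_def using mixed_nonneg[OF assms(3)] by (auto simp: tag_left_def)
qed

lemma tag_right_mixed:
  assumes "finite A" "finite B" "x \<in> mixed B"
  shows "tag_right x \<in> mixed (tagged_union A B)"
proof -
  have "tag_right x a = 0" if "a \<notin> tagged_union A B" for a
  proof (cases "odd a")
    case True
    then have "a = 2 * (a div 2) + 1" by simp
    then have "a div 2 \<notin> B" using that unfolding tagged_union_def by (metis UnI2 imageI)
    then show ?thesis using mixed_outside[OF assms(3)] by (simp add: tag_right_def)
  qed (simp add: tag_right_def)
  moreover have "(\<Sum>a\<in>tagged_union A B. tag_right x a) = 1"
    using mixed_sum[OF assms(3)] by (simp add: sum_tagged_union[OF assms(1,2)] tag_right_def)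
  ultimately show ?thesis
    unfolding mixed_def using mixed_nonneg[OF assms(3)] by (auto simp: tag_right_def)
qed

text \<open>The row player first chooses which of the two games to play; the column player,
  not knowing the choice, answers with a pair of columns, one for each game.\<close>

definition max_game :: "(nat \<Rightarrow> nat \<Rightarrow> real) \<Rightarrow> (nat \<Rightarrow> nat \<Rightarrow> real) \<Rightarrow> nat \<Rightarrow> nat \<Rightarrow> real" where
  "max_game M N a b =
     (if even a then M (a div 2) (fst (prod_decode b)) else N (a div 2) (snd (prod_decode b)))"

lemma row_guarantee_max_game_left:
  assumes "finite I" "finite I2" "finite J" "J \<noteq> {}" "finite J2" "J2 \<noteq> {}"
  shows "row_guarantee I J M x
           \<le> row_guarantee (tagged_union I I2) (pair_set J J2) (max_game M N) (tag_left x)"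
proof (rule row_guarantee_geI)
  fix b assume "b \<in> pair_set J J2"
  then obtain j j2 where j: "j \<in> J" "j2 \<in> J2" "b = prod_encode (j, j2)" by (rule pair_setE)
  have "col_payoff (tagged_union I I2) (max_game M N) (tag_left x) b = col_payoff I M x j"
    by (simp add: col_payoff_def sum_tagged_union[OF assms(1,2)] tag_left_def max_game_def j(3))
  then show "row_guarantee I J M x \<le> col_payoff (tagged_union I I2) (max_game M N) (tag_left x) b"
    using row_guarantee_le[OF assms(3) j(1)] by simp
qed (use assms in \<open>auto simp: finite_pair_set pair_set_nonempty\<close>)

lemma row_guarantee_max_game_right:
  assumes "finite I" "finite I2" "finite J" "J \<noteq> {}" "finite J2" "J2 \<noteq> {}"
  shows "row_guarantee I2 J2 N x
           \<le> row_guarantee (tagged_union I I2) (pair_set J J2) (max_game M N) (tag_right x)"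
proof (rule row_guarantee_geI)
  fix b assume "b \<in> pair_set J J2"
  then obtain j j2 where j: "j \<in> J" "j2 \<in> J2" "b = prod_encode (j, j2)" by (rule pair_setE)
  have "col_payoff (tagged_union I I2) (max_game M N) (tag_right x) b = col_payoff I2 N x j2"
    by (simp add: col_payoff_def sum_tagged_union[OF assms(1,2)] tag_right_def max_game_def j(3))
  then show "row_guarantee I2 J2 N x \<le> col_payoff (tagged_union I I2) (max_game M N) (tag_right x) b"
    using row_guarantee_le[OF assms(5) j(2)] by simp
qed (use assms in \<open>auto simp: finite_pair_set pair_set_nonempty\<close>)

lemma col_guarantee_max_game:
  assumes "finite I" "I \<noteq> {}" "finite I2" "finite J" "finite J2" "y \<in> mixed J" "z \<in> mixed J2"
  shows "col_guarantee (tagged_union I I2) (pair_set J J2) (max_game M N) (product_mix J J2 y z)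
           \<le> max (col_guarantee I J M y) (col_guarantee I2 J2 N z)"
proof (rule col_guarantee_leI)
  fix a assume "a \<in> tagged_union I I2"
  then consider (left) i where "i \<in> I" "a = 2 * i" | (right) i where "i \<in> I2" "a = 2 * i + 1"
    unfolding tagged_union_def by blast
  then show "row_payoff (pair_set J J2) (max_game M N) (product_mix J J2 y z) a
               \<le> max (col_guarantee I J M y) (col_guarantee I2 J2 N z)"
  proof cases
    case left
    have "row_payoff (pair_set J J2) (max_game M N) (product_mix J J2 y z) a
        = (\<Sum>j\<in>J. y j * M i j * (\<Sum>j2\<in>J2. z j2))"
      unfolding row_payoff_def sum_pair_set[OF assms(4,5)] sum_distrib_left
      by (intro sum.cong refl) (simp add: product_mix_encode max_game_def left mult_ac)
    also have "\<dots> = row_payoff J M y i" using mixed_sum[OF assms(7)] by (simp add: row_payoff_def)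
    also have "\<dots> \<le> col_guarantee I J M y" by (rule col_guarantee_ge[OF assms(1) left(1)])
    finally show ?thesis by simp
  next
    case right
    have "row_payoff (pair_set J J2) (max_game M N) (product_mix J J2 y z) a
        = (\<Sum>j2\<in>J2. z j2 * N i j2 * (\<Sum>j\<in>J. y j))"
      unfolding row_payoff_def sum_pair_set[OF assms(4,5)] sum_distrib_left
      by (subst sum.swap) (intro sum.cong refl, simp add: product_mix_encode max_game_def right mult_ac)
    also have "\<dots> = row_payoff J2 N z i" using mixed_sum[OF assms(6)] by (simp add: row_payoff_def)
    also have "\<dots> \<le> col_guarantee I2 J2 N z" by (rule col_guarantee_ge[OF assms(3) right(1)])
    finally show ?thesis by simp
  qed
qed (use assms in \<open>auto simp: finite_tagged_union tagged_union_nonempty\<close>)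

theorem Val_max_game:
  assumes I: "finite I" "I \<noteq> {}" and J: "finite J" "J \<noteq> {}"
    and I2: "finite I2" "I2 \<noteq> {}" and J2: "finite J2" "J2 \<noteq> {}"
  shows "Val (tagged_union I I2) (pair_set J J2) (max_game M N) = max (Val I J M) (Val I2 J2 N)"
proof (rule Val_eqI)
  fix e :: real assume e: "0 < e"
  obtain x where x: "x \<in> mixed I" "Val I J M - e < row_guarantee I J M x"
    using Val_approx_row[OF I J e] .
  obtain x2 where x2: "x2 \<in> mixed I2" "Val I2 J2 N - e < row_guarantee I2 J2 N x2"
    using Val_approx_row[OF I2 J2 e] .
  show "\<exists>x'\<in>mixed (tagged_union I I2).
          max (Val I J M) (Val I2 J2 N) - e \<le> row_guarantee (tagged_union I I2) (pair_set J J2) (max_game M N) x'"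
  proof (cases "Val I2 J2 N \<le> Val I J M")
    case True
    then show ?thesis
      using x row_guarantee_max_game_left[OF I(1) I2(1) J J2, of M x N]
      by (intro bexI[of _ "tag_left x"] tag_left_mixed I(1) I2(1)) auto
  next
    case False
    then show ?thesis
      using x2 row_guarantee_max_game_right[OF I(1) I2(1) J J2, of N x2 M]
      by (intro bexI[of _ "tag_right x2"] tag_right_mixed I(1) I2(1)) auto
  qed
  obtain y where y: "y \<in> mixed J" "col_guarantee I J M y < Val I J M + e"
    using Val_approx_col[OF I J e] .
  obtain y2 where y2: "y2 \<in> mixed J2" "col_guarantee I2 J2 N y2 < Val I2 J2 N + e"
    using Val_approx_col[OF I2 J2 e] .
  show "\<exists>y'\<in>mixed (pair_set J J2).
          col_guarantee (tagged_union I I2) (pair_set J J2) (max_game M N) y' \<le> max (Val I J M) (Val I2 J2 N) + e"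
    using y y2 col_guarantee_max_game[OF I I2(1) J(1) J2(1) y(1) y2(1), of M N]
    by (intro bexI[of _ "product_mix J J2 y y2"] product_mix_mixed J(1) J2(1)) auto
qed (use I I2 J J2 in \<open>auto simp: finite_tagged_union tagged_union_nonempty finite_pair_set pair_set_nonempty\<close>)

definition mix_game :: "real \<Rightarrow> (nat \<Rightarrow> nat \<Rightarrow> real) \<Rightarrow> (nat \<Rightarrow> nat \<Rightarrow> real) \<Rightarrow> nat \<Rightarrow> nat \<Rightarrow> real" where
  "mix_game lam M N a b = lam * M (fst (prod_decode a)) (fst (prod_decode b))
     + (1 - lam) * N (snd (prod_decode a)) (snd (prod_decode b))"

lemma row_guarantee_mix_game:
  assumes I: "finite I" "finite I2" and J: "finite J" "J \<noteq> {}" "finite J2" "J2 \<noteq> {}"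
    and x: "x \<in> mixed I" "x2 \<in> mixed I2" and lam: "0 \<le> lam" "lam \<le> 1"
  shows "lam * row_guarantee I J M x + (1 - lam) * row_guarantee I2 J2 N x2
           \<le> row_guarantee (pair_set I I2) (pair_set J J2) (mix_game lam M N) (product_mix I I2 x x2)"
proof (rule row_guarantee_geI)
  fix b assume "b \<in> pair_set J J2"
  then obtain j j2 where j: "j \<in> J" "j2 \<in> J2" "b = prod_encode (j, j2)" by (rule pair_setE)
  have "col_payoff (pair_set I I2) (mix_game lam M N) (product_mix I I2 x x2) b
      = (\<Sum>i\<in>I. \<Sum>i2\<in>I2. lam * (x i * M i j) * x2 i2 + (1 - lam) * (x2 i2 * N i2 j2) * x i)"
    unfolding col_payoff_def sum_pair_set[OF I]
    by (intro sum.cong refl) (simp add: product_mix_encode mix_game_def j(3) algebra_simps)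
  also have "\<dots> = lam * col_payoff I M x j + (1 - lam) * col_payoff I2 N x2 j2"
    by (simp add: col_payoff_def sum.distrib sum_distrib_left[symmetric] sum_distrib_right[symmetric]
        mixed_sum[OF x(1)] mixed_sum[OF x(2)] flip: sum.swap[of _ I])
  finally show "lam * row_guarantee I J M x + (1 - lam) * row_guarantee I2 J2 N x2
      \<le> col_payoff (pair_set I I2) (mix_game lam M N) (product_mix I I2 x x2) b"
    using row_guarantee_le[OF J(1) j(1), of I M x] row_guarantee_le[OF J(3) j(2), of I2 N x2] lam
    by (simp add: add_mono mult_left_mono)
qed (use J in \<open>auto simp: finite_pair_set pair_set_nonempty\<close>)

text \<open>Negating and transposing commutes with mixing, so the column side follows from the
  row side by exchanging the players.\<close>

lemma mix_game_neg_transpose: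
  "(\<lambda>b a. - mix_game lam (\<lambda>j i. - M i j) (\<lambda>j i. - N i j) a b) = mix_game lam M N"
  by (simp add: mix_game_def fun_eq_iff)

lemma col_guarantee_mix_game:
  assumes I: "finite I" "I \<noteq> {}" "finite I2" "I2 \<noteq> {}" and J: "finite J" "finite J2"
    and y: "y \<in> mixed J" "y2 \<in> mixed J2" and lam: "0 \<le> lam" "lam \<le> 1"
  shows "col_guarantee (pair_set I I2) (pair_set J J2) (mix_game lam M N) (product_mix J J2 y y2)
           \<le> lam * col_guarantee I J M y + (1 - lam) * col_guarantee I2 J2 N y2"
proof -
  let ?M' = "mix_game lam (\<lambda>j i. - M i j) (\<lambda>j i. - N i j)"
  have "lam * row_guarantee J I (\<lambda>j i. - M i j) y + (1 - lam) * row_guarantee J2 I2 (\<lambda>j i. - N i j) y2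
      \<le> row_guarantee (pair_set J J2) (pair_set I I2) ?M' (product_mix J J2 y y2)"
    by (rule row_guarantee_mix_game[OF J I y lam])
  also have "\<dots> = - col_guarantee (pair_set I I2) (pair_set J J2) (mix_game lam M N) (product_mix J J2 y y2)"
    using col_guarantee_neg_transpose[of "pair_set I I2" "pair_set J J2" ?M'] I
    by (simp add: mix_game_neg_transpose finite_pair_set pair_set_nonempty)
  finally show ?thesis
    by (simp add: row_guarantee_neg_transpose[OF I(1,2)] row_guarantee_neg_transpose[OF I(3,4)])
qed

theorem Val_mix_game:
  assumes I: "finite I" "I \<noteq> {}" and J: "finite J" "J \<noteq> {}"
    and I2: "finite I2" "I2 \<noteq> {}" and J2: "finite J2" "J2 \<noteq> {}"
    and lam: "0 \<le> lam" "lam \<le> 1"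
  shows "Val (pair_set I I2) (pair_set J J2) (mix_game lam M N) = lam * Val I J M + (1 - lam) * Val I2 J2 N"
proof (rule Val_eqI)
  fix e :: real assume e: "0 < e"
  obtain x where x: "x \<in> mixed I" "Val I J M - e < row_guarantee I J M x"
    using Val_approx_row[OF I J e] .
  obtain x2 where x2: "x2 \<in> mixed I2" "Val I2 J2 N - e < row_guarantee I2 J2 N x2"
    using Val_approx_row[OF I2 J2 e] .
  have "lam * (Val I J M - e) + (1 - lam) * (Val I2 J2 N - e)
      \<le> lam * row_guarantee I J M x + (1 - lam) * row_guarantee I2 J2 N x2"
    using x x2 lam by (intro add_mono mult_left_mono) auto
  then show "\<exists>x'\<in>mixed (pair_set I I2). lam * Val I J M + (1 - lam) * Val I2 J2 N - e
      \<le> row_guarantee (pair_set I I2) (pair_set J J2) (mix_game lam M N) x'"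
    using row_guarantee_mix_game[OF I(1) I2(1) J J2 x(1) x2(1) lam, of M N]
    by (intro bexI[of _ "product_mix I I2 x x2"] product_mix_mixed I(1) I2(1) x(1) x2(1))
       (simp add: algebra_simps)
  obtain y where y: "y \<in> mixed J" "col_guarantee I J M y < Val I J M + e"
    using Val_approx_col[OF I J e] .
  obtain y2 where y2: "y2 \<in> mixed J2" "col_guarantee I2 J2 N y2 < Val I2 J2 N + e"
    using Val_approx_col[OF I2 J2 e] .
  have "lam * col_guarantee I J M y + (1 - lam) * col_guarantee I2 J2 N y2
      \<le> lam * (Val I J M + e) + (1 - lam) * (Val I2 J2 N + e)"
    using y y2 lam by (intro add_mono mult_left_mono) auto
  then show "\<exists>y'\<in>mixed (pair_set J J2). col_guarantee (pair_set I I2) (pair_set J J2) (mix_game lam M N) y'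
      \<le> lam * Val I J M + (1 - lam) * Val I2 J2 N + e"
    using col_guarantee_mix_game[OF I I2 J(1) J2(1) y(1) y2(1) lam, of M N]
    by (intro bexI[of _ "product_mix J J2 y y2"] product_mix_mixed J(1) J2(1) y(1) y2(1))
       (simp add: algebra_simps)
qed (use I I2 J J2 in \<open>auto simp: finite_pair_set pair_set_nonempty\<close>)

section \<open>Closure properties of the non revealing functions\<close>

definition belief_game :: "real ^ 'k::finite \<Rightarrow> ('k \<Rightarrow> nat \<Rightarrow> nat \<Rightarrow> real) \<Rightarrow> nat \<Rightarrow> nat \<Rightarrow> real" where
  "belief_game p G i j = (\<Sum>k\<in>UNIV. p $ k * G k i j)"

lemma D0_iff:
  "f \<in> D0 \<longleftrightarrow> (\<exists>I J (G :: 'k::finite \<Rightarrow> nat \<Rightarrow> nat \<Rightarrow> real).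
     finite I \<and> I \<noteq> {} \<and> finite J \<and> J \<noteq> {} \<and> (\<forall>k i j. \<bar>G k i j\<bar> \<le> 1) \<and>
     (\<forall>p\<in>simplexK. f p = Val I J (belief_game p G)))"
  unfolding D0_def belief_game_def[abs_def] by simp

lemma D0E:
  assumes "f \<in> D0"
  obtains I J and G :: "'k::finite \<Rightarrow> nat \<Rightarrow> nat \<Rightarrow> real" where
    "finite I" "I \<noteq> {}" "finite J" "J \<noteq> {}" "\<forall>k i j. \<bar>G k i j\<bar> \<le> 1"
    "\<forall>p\<in>simplexK. f p = Val I J (belief_game p G)"
  using assms unfolding D0_iff by blast

lemma D0I:
  fixes G :: "'k::finite \<Rightarrow> nat \<Rightarrow> nat \<Rightarrow> real"
  assumes "finite I" "I \<noteq> {}" "finite J" "J \<noteq> {}" "\<forall>k i j. \<bar>G k i j\<bar> \<le> 1"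
    "\<forall>p\<in>simplexK. f p = Val I J (belief_game p G)"
  shows "f \<in> D0"
  unfolding D0_iff using assms by blast

text \<open>Each game construction above acts entrywise on the matrices, so it commutes with
  averaging over the states; this transfers the value formulas to non revealing functions.\<close>

lemma D0_neg:
  assumes "f \<in> D0"
  shows "(\<lambda>p. - f p) \<in> D0"
proof -
  obtain I J G where G: "finite I" "I \<noteq> {}" "finite J" "J \<noteq> {}" "\<forall>k i j. \<bar>G k i j\<bar> \<le> 1"
    "\<forall>p\<in>simplexK. f p = Val I J (belief_game p G)"
    using D0E[OF assms] by blast
  have "belief_game p (\<lambda>k j i. - G k i j) = (\<lambda>j i. - belief_game p G i j)" for p
    by (simp add: belief_game_def fun_eq_iff sum_negf)
  then show ?thesis
    using G by (intro D0I[where I=J and J=I and G="\<lambda>k j i. - G k i j"]) (auto simp: Val_neg_transpose)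
qed

lemma D0_max:
  assumes "f \<in> D0" "g \<in> D0"
  shows "(\<lambda>p. max (f p) (g p)) \<in> D0"
proof -
  obtain I J G where G: "finite I" "I \<noteq> {}" "finite J" "J \<noteq> {}" "\<forall>k i j. \<bar>G k i j\<bar> \<le> 1"
    "\<forall>p\<in>simplexK. f p = Val I J (belief_game p G)"
    using D0E[OF assms(1)] by blast
  obtain I2 J2 G2 where G2: "finite I2" "I2 \<noteq> {}" "finite J2" "J2 \<noteq> {}" "\<forall>k i j. \<bar>G2 k i j\<bar> \<le> 1"
    "\<forall>p\<in>simplexK. g p = Val I2 J2 (belief_game p G2)"
    using D0E[OF assms(2)] by blast
  have "belief_game p (\<lambda>k. max_game (G k) (G2 k)) = max_game (belief_game p G) (belief_game p G2)" for p
    by (simp add: belief_game_def max_game_def fun_eq_iff)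
  then show ?thesis
    using G G2
    by (intro D0I[where I="tagged_union I I2" and J="pair_set J J2" and G="\<lambda>k. max_game (G k) (G2 k)"])
       (auto simp: Val_max_game finite_tagged_union tagged_union_nonempty finite_pair_set
         pair_set_nonempty max_game_def)
qed

lemma abs_convex_combination_le:
  fixes a b lam :: real
  assumes "0 \<le> lam" "lam \<le> 1" "\<bar>a\<bar> \<le> B" "\<bar>b\<bar> \<le> B"
  shows "\<bar>lam * a + (1 - lam) * b\<bar> \<le> B"
proof -
  have "\<bar>lam * a + (1 - lam) * b\<bar> \<le> lam * \<bar>a\<bar> + (1 - lam) * \<bar>b\<bar>"
    using assms(1,2) by (metis abs_triangle_ineq abs_mult abs_of_nonneg diff_ge_0_iff_ge)
  also have "\<dots> \<le> lam * B + (1 - lam) * B"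
    using assms by (intro add_mono mult_left_mono) auto
  finally show ?thesis by (simp add: algebra_simps)
qed

lemma D0_convex:
  assumes "f \<in> D0" "g \<in> D0" "0 \<le> lam" "lam \<le> 1"
  shows "(\<lambda>p. lam * f p + (1 - lam) * g p) \<in> D0"
proof -
  obtain I J G where G: "finite I" "I \<noteq> {}" "finite J" "J \<noteq> {}" "\<forall>k i j. \<bar>G k i j\<bar> \<le> 1"
    "\<forall>p\<in>simplexK. f p = Val I J (belief_game p G)"
    using D0E[OF assms(1)] by blast
  obtain I2 J2 G2 where G2: "finite I2" "I2 \<noteq> {}" "finite J2" "J2 \<noteq> {}" "\<forall>k i j. \<bar>G2 k i j\<bar> \<le> 1"
    "\<forall>p\<in>simplexK. g p = Val I2 J2 (belief_game p G2)"
    using D0E[OF assms(2)] by blast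
  have "belief_game p (\<lambda>k. mix_game lam (G k) (G2 k)) = mix_game lam (belief_game p G) (belief_game p G2)" for p
    by (simp add: belief_game_def mix_game_def fun_eq_iff distrib_left sum.distrib sum_distrib_left mult.left_commute)
  moreover have "\<bar>mix_game lam (G k) (G2 k) i j\<bar> \<le> 1" for k i j
    unfolding mix_game_def using G(5) G2(5) assms(3,4) by (intro abs_convex_combination_le) auto
  ultimately show ?thesis
    using G G2 assms(3,4)
    by (intro D0I[where I="pair_set I I2" and J="pair_set J J2" and G="\<lambda>k. mix_game lam (G k) (G2 k)"])
       (auto simp: Val_mix_game finite_pair_set pair_set_nonempty)
qed

lemma D0_min:
  assumes "f \<in> D0" "g \<in> D0"
  shows "(\<lambda>p. min (f p) (g p)) \<in> D0"
proof -
  have "(\<lambda>p. - max (- f p) (- g p)) \<in> D0"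
    using assms by (intro D0_neg D0_max)
  moreover have "(\<lambda>p. - max (- f p) (- g p)) = (\<lambda>p. min (f p) (g p))"
    by (simp add: fun_eq_iff min_def max_def)
  ultimately show ?thesis by simp
qed

text \<open>Linear functions with coefficients in [-1, 1] are non revealing: they are the values
  of one-by-one games.\<close>

lemma Val_singleton: "Val {0} {0} M = M 0 0"
proof (rule Val_eqI)
  have "row_guarantee {0} {0} M (pure 0) = M 0 0" "col_guarantee {0} {0} M (pure 0) = M 0 0"
    by (simp_all add: row_guarantee_def col_guarantee_def col_payoff_def row_payoff_def pure_def)
  moreover have "pure 0 \<in> mixed {0}" by (simp add: pure_mixed)
  ultimately show "\<exists>x\<in>mixed {0}. M 0 0 - e \<le> row_guarantee {0} {0} M x"
    and "\<exists>y\<in>mixed {0}. col_guarantee {0} {0} M y \<le> M 0 0 + e" if "0 < e" for e :: real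
    using that by force+
qed auto

lemma D0_linear:
  fixes a :: "'k::finite \<Rightarrow> real"
  assumes "\<forall>k. \<bar>a k\<bar> \<le> 1"
  shows "(\<lambda>p::real ^ 'k. \<Sum>k\<in>UNIV. p $ k * a k) \<in> D0"
  using assms
  by (intro D0I[where I="{0}" and J="{0}" and G="\<lambda>k i j. a k"]) (auto simp: Val_singleton belief_game_def)

text \<open>Scaling by a factor in [0, 1] is mixing with the zero function.\<close>

lemma D0_scale:
  assumes "g \<in> D0" "0 \<le> s" "s \<le> 1"
  shows "(\<lambda>p. s * g p) \<in> D0"
  using D0_convex[OF assms(1) D0_linear[of "\<lambda>_. 0"] assms(2,3)] by simp

section \<open>A lattice version of the Stone-Weierstrass theorem\<close>

lemma lattice_closed_Max:
  fixes L :: "('a \<Rightarrow> real) set"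
  assumes max: "\<And>g h. g \<in> L \<Longrightarrow> h \<in> L \<Longrightarrow> (\<lambda>z. max (g z) (h z)) \<in> L"
    and "finite T" "T \<noteq> {}" "\<And>y. y \<in> T \<Longrightarrow> F y \<in> L"
  shows "(\<lambda>z. Max ((\<lambda>y. F y z) ` T)) \<in> L"
  using assms(2-4)
proof (induction T rule: finite_ne_induct)
  case (insert y T)
  have "(\<lambda>z. Max ((\<lambda>y. F y z) ` insert y T)) = (\<lambda>z. max (F y z) (Max ((\<lambda>y. F y z) ` T)))"
    using insert by (simp add: fun_eq_iff)
  then show ?case using insert max by simp
qed (simp add: fun_eq_iff[symmetric])

lemma lattice_closed_Min:
  fixes L :: "('a \<Rightarrow> real) set"
  assumes min: "\<And>g h. g \<in> L \<Longrightarrow> h \<in> L \<Longrightarrow> (\<lambda>z. min (g z) (h z)) \<in> L"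
    and "finite T" "T \<noteq> {}" "\<And>y. y \<in> T \<Longrightarrow> F y \<in> L"
  shows "(\<lambda>z. Min ((\<lambda>y. F y z) ` T)) \<in> L"
  using assms(2-4)
proof (induction T rule: finite_ne_induct)
  case (insert y T)
  have "(\<lambda>z. Min ((\<lambda>y. F y z) ` insert y T)) = (\<lambda>z. min (F y z) (Min ((\<lambda>y. F y z) ` T)))"
    using insert by (simp add: fun_eq_iff)
  then show ?case using insert min by simp
qed (simp add: fun_eq_iff[symmetric])

lemma compact_positive_cover:
  fixes S :: "'a::topological_space set" and \<phi> :: "'a \<Rightarrow> 'a \<Rightarrow> real"
  assumes "compact S" and cont: "\<And>y. y \<in> S \<Longrightarrow> continuous_on S (\<phi> y)"
    and pos: "\<And>y. y \<in> S \<Longrightarrow> 0 < \<phi> y y"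
  obtains T where "finite T" "T \<subseteq> S" "\<And>z. z \<in> S \<Longrightarrow> \<exists>y\<in>T. 0 < \<phi> y z"
proof -
  have "\<forall>y\<in>S. \<exists>U. open U \<and> U \<inter> S = \<phi> y -` {0<..} \<inter> S"
    using cont unfolding continuous_on_open_invariant by (simp add: open_greaterThan)
  then obtain U where U_open: "\<And>y. y \<in> S \<Longrightarrow> open (U y)"
    and U_eq: "\<And>y. y \<in> S \<Longrightarrow> U y \<inter> S = \<phi> y -` {0<..} \<inter> S"
    by (metis bchoice)
  have cover: "S \<subseteq> (\<Union>y\<in>S. U y)" using U_eq pos by blast
  obtain T where T: "T \<subseteq> S" "finite T" "S \<subseteq> (\<Union>y\<in>T. U y)"
    using compactE_image[OF assms(1) U_open cover] by blast
  have "\<exists>y\<in>T. 0 < \<phi> y z" if z: "z \<in> S" for z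
  proof -
    obtain y where "y \<in> T" "z \<in> U y" using T(3) z by blast
    moreover have "z \<in> U y \<inter> S" using calculation z by blast
    ultimately show ?thesis using U_eq[of y] T(1) by blast
  qed
  with T that show ?thesis by blast
qed

lemma lattice_approx_from_below:
  fixes S :: "'a::topological_space set" and L :: "('a \<Rightarrow> real) set"
  assumes "compact S" and cont: "\<And>h. h \<in> L \<Longrightarrow> continuous_on S h"
    and max: "\<And>g h. g \<in> L \<Longrightarrow> h \<in> L \<Longrightarrow> (\<lambda>z. max (g z) (h z)) \<in> L"
    and interp: "\<And>y. y \<in> S \<Longrightarrow> \<exists>h\<in>L. h x = u x \<and> h y = u y"
    and u: "continuous_on S u" and "0 < e" and x: "x \<in> S"
  shows "\<exists>g\<in>L. g x \<le> u x \<and> (\<forall>z\<in>S. u z - e < g z)"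
proof -
  obtain h where h: "\<And>y. y \<in> S \<Longrightarrow> h y \<in> L \<and> h y x = u x \<and> h y y = u y"
    using interp by metis
  have cont_h: "continuous_on S (\<lambda>z. h y z - u z + e)" if "y \<in> S" for y
    using h[OF that] cont u by (intro continuous_intros) auto
  have pos_h: "0 < h y y - u y + e" if "y \<in> S" for y using h[OF that] \<open>0 < e\<close> by simp
  obtain T where T: "finite T" "T \<subseteq> S" "\<And>z. z \<in> S \<Longrightarrow> \<exists>y\<in>T. 0 < h y z - u z + e"
    using compact_positive_cover[OF assms(1) cont_h pos_h] by blast
  have "T \<noteq> {}" using T(3)[OF x] by blast
  define g where "g z = Max ((\<lambda>y. h y z) ` T)" for z
  have "g \<in> L" unfolding g_def[abs_def]
    by (rule lattice_closed_Max[OF max T(1) \<open>T \<noteq> {}\<close>]) (use h T(2) in auto)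
  moreover have "g x \<le> u x" unfolding g_def using T(1,2) \<open>T \<noteq> {}\<close> h by auto
  moreover have "u z - e < g z" if z: "z \<in> S" for z
  proof -
    obtain y where "y \<in> T" "u z - e < h y z" using T(3)[OF z] by auto
    then show ?thesis unfolding g_def using T(1) by (meson Max_ge finite_imageI imageI less_le_trans)
  qed
  ultimately show ?thesis by blast
qed

theorem lattice_approximation:
  fixes S :: "'a::topological_space set" and L :: "('a \<Rightarrow> real) set"
  assumes "compact S" "S \<noteq> {}" and cont: "\<And>h. h \<in> L \<Longrightarrow> continuous_on S h"
    and max: "\<And>g h. g \<in> L \<Longrightarrow> h \<in> L \<Longrightarrow> (\<lambda>z. max (g z) (h z)) \<in> L"
    and min: "\<And>g h. g \<in> L \<Longrightarrow> h \<in> L \<Longrightarrow> (\<lambda>z. min (g z) (h z)) \<in> L"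
    and interp: "\<And>x y a b. x \<in> S \<Longrightarrow> y \<in> S \<Longrightarrow> (x = y \<Longrightarrow> a = b) \<Longrightarrow> \<exists>h\<in>L. h x = a \<and> h y = b"
    and u: "continuous_on S u" and e: "0 < e"
  shows "\<exists>h\<in>L. \<forall>z\<in>S. \<bar>u z - h z\<bar> < e"
proof -
  have "\<exists>g\<in>L. g x \<le> u x \<and> (\<forall>z\<in>S. u z - e < g z)" if "x \<in> S" for x
    by (rule lattice_approx_from_below[OF assms(1) cont max _ u e that]) (use interp that in auto)
  then obtain g where g: "\<And>x. x \<in> S \<Longrightarrow> g x \<in> L"
    and g_at: "\<And>x. x \<in> S \<Longrightarrow> g x x \<le> u x" and g_above: "\<And>x z. x \<in> S \<Longrightarrow> z \<in> S \<Longrightarrow> u z - e < g x z"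
    by metis
  have cont_g: "continuous_on S (\<lambda>z. u z + e - g x z)" if "x \<in> S" for x
    using g[OF that] cont u by (intro continuous_intros) auto
  have pos_g: "0 < u x + e - g x x" if "x \<in> S" for x using g_at[OF that] e by simp
  obtain T where T: "finite T" "T \<subseteq> S" "\<And>z. z \<in> S \<Longrightarrow> \<exists>x\<in>T. 0 < u z + e - g x z"
    using compact_positive_cover[OF assms(1) cont_g pos_g] by blast
  have "T \<noteq> {}" using T(3) \<open>S \<noteq> {}\<close> by blast
  define h where "h z = Min ((\<lambda>x. g x z) ` T)" for z
  have "h \<in> L" unfolding h_def[abs_def]
    by (rule lattice_closed_Min[OF min T(1) \<open>T \<noteq> {}\<close>]) (use g T(2) in auto)
  moreover have "\<bar>u z - h z\<bar> < e" if z: "z \<in> S" for z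
  proof -
    obtain x where "x \<in> T" "g x z < u z + e" using T(3)[OF z] by auto
    then have "h z < u z + e" unfolding h_def using T(1) by (meson Min_le finite_imageI imageI le_less_trans)
    moreover have "u z - e < h z" unfolding h_def using T g_above z \<open>T \<noteq> {}\<close> by auto
    ultimately show ?thesis by (simp add: abs_less_iff)
  qed
  ultimately show ?thesis by blast
qed

section \<open>Density of the span of the non revealing functions\<close>

text \<open>Unlike D0
  itself this cone is closed under max and min and contains every linear function, so the
  lattice approximation theorem applies to it.\<close>

definition D0_cone :: "(real ^ 'k::finite \<Rightarrow> real) set" where
  "D0_cone = {f. continuous_on simplexK f \<and> (\<exists>c>0. \<exists>g\<in>D0. \<forall>p\<in>simplexK. f p = c * g p)}"

lemma D0_coneI:
  "continuous_on simplexK f \<Longrightarrow> 0 < c \<Longrightarrow> g \<in> D0 \<Longrightarrow> \<forall>p\<in>simplexK. f p = c * g p \<Longrightarrow> f \<in> D0_cone"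
  unfolding D0_cone_def by blast

lemma D0_coneE:
  assumes "f \<in> D0_cone"
  obtains c g where "continuous_on simplexK f" "0 < c" "g \<in> D0" "\<forall>p\<in>simplexK. f p = c * g p"
  using assms unfolding D0_cone_def by blast

lemma D0_cone_linear: "(\<lambda>p::real ^ 'k::finite. \<Sum>k\<in>UNIV. p $ k * a k) \<in> D0_cone"
proof -
  define c where "c = 1 + (\<Sum>k\<in>UNIV. \<bar>a k\<bar>)"
  have c: "0 < c" unfolding c_def by (simp add: add_pos_nonneg sum_nonneg)
  have "\<bar>a k\<bar> \<le> c" for k
    using member_le_sum[of k UNIV "\<lambda>k. \<bar>a k\<bar>"] unfolding c_def by simp
  then have "\<forall>k. \<bar>a k / c\<bar> \<le> 1" using c by simp
  define g where "g = (\<lambda>p::real ^ 'k. \<Sum>k\<in>UNIV. p $ k * (a k / c))"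
  have "g \<in> D0" unfolding g_def by (rule D0_linear) fact
  moreover have "\<forall>p\<in>simplexK. (\<Sum>k\<in>UNIV. p $ k * a k) = c * g p"
    using c by (simp add: g_def sum_distrib_left)
  moreover have "continuous_on simplexK (\<lambda>p::real ^ 'k. \<Sum>k\<in>UNIV. p $ k * a k)"
    by (intro continuous_intros)
  ultimately show ?thesis using c by (intro D0_coneI)
qed

text \<open>Two members of the cone can be written as multiples of D0 functions with a common
  factor, since D0 is closed under scaling by factors in [0, 1].\<close>

lemma D0_cone_common_scale:
  assumes "f1 \<in> D0_cone" "f2 \<in> D0_cone"
  obtains c h1 h2 where "0 < c" "h1 \<in> D0" "h2 \<in> D0"
    "\<forall>p\<in>simplexK. f1 p = c * h1 p" "\<forall>p\<in>simplexK. f2 p = c * h2 p"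
proof -
  obtain c1 g1 where g1: "0 < c1" "g1 \<in> D0" "\<forall>p\<in>simplexK. f1 p = c1 * g1 p"
    using D0_coneE[OF assms(1)] by blast
  obtain c2 g2 where g2: "0 < c2" "g2 \<in> D0" "\<forall>p\<in>simplexK. f2 p = c2 * g2 p"
    using D0_coneE[OF assms(2)] by blast
  define c where "c = max c1 c2"
  have c: "0 < c" using g1 unfolding c_def by simp
  have "c1 \<le> c" "c2 \<le> c" by (simp_all add: c_def)
  then have "(\<lambda>p. (c1 / c) * g1 p) \<in> D0" "(\<lambda>p. (c2 / c) * g2 p) \<in> D0"
    by (intro D0_scale g1(2) g2(2); use g1 g2 c in \<open>simp add: pos_divide_le_eq\<close>)+
  moreover have "\<forall>p\<in>simplexK. f1 p = c * ((c1 / c) * g1 p)" "\<forall>p\<in>simplexK. f2 p = c * ((c2 / c) * g2 p)"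
    using g1 g2 c by auto
  ultimately show ?thesis using that[OF c] by blast
qed

lemma D0_cone_max:
  assumes "f1 \<in> D0_cone" "f2 \<in> D0_cone"
  shows "(\<lambda>p. max (f1 p) (f2 p)) \<in> D0_cone"
proof -
  obtain c h1 h2 where h: "0 < c" "h1 \<in> D0" "h2 \<in> D0"
    "\<forall>p\<in>simplexK. f1 p = c * h1 p" "\<forall>p\<in>simplexK. f2 p = c * h2 p"
    using D0_cone_common_scale[OF assms] .
  have "(\<lambda>p. max (h1 p) (h2 p)) \<in> D0" using h by (intro D0_max)
  moreover have "\<forall>p\<in>simplexK. max (f1 p) (f2 p) = c * max (h1 p) (h2 p)"
    using h by (simp add: max_mult_distrib_left)
  moreover have "continuous_on simplexK (\<lambda>p. max (f1 p) (f2 p))"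
    using D0_coneE[OF assms(1)] D0_coneE[OF assms(2)] by (blast intro: continuous_on_max)
  ultimately show ?thesis using h(1) by (intro D0_coneI)
qed

lemma D0_cone_min:
  assumes "f1 \<in> D0_cone" "f2 \<in> D0_cone"
  shows "(\<lambda>p. min (f1 p) (f2 p)) \<in> D0_cone"
proof -
  obtain c h1 h2 where h: "0 < c" "h1 \<in> D0" "h2 \<in> D0"
    "\<forall>p\<in>simplexK. f1 p = c * h1 p" "\<forall>p\<in>simplexK. f2 p = c * h2 p"
    using D0_cone_common_scale[OF assms] .
  have "(\<lambda>p. min (h1 p) (h2 p)) \<in> D0" using h by (intro D0_min)
  moreover have "\<forall>p\<in>simplexK. min (f1 p) (f2 p) = c * min (h1 p) (h2 p)"
    using h by (simp add: min_mult_distrib_left)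
  moreover have "continuous_on simplexK (\<lambda>p. min (f1 p) (f2 p))"
    using D0_coneE[OF assms(1)] D0_coneE[OF assms(2)] by (blast intro: continuous_on_min)
  ultimately show ?thesis using h(1) by (intro D0_coneI)
qed

lemma compact_simplexK: "compact (simplexK :: (real ^ 'k::finite) set)"
proof -
  have eq: "simplexK = {p :: real ^ 'k. \<forall>k. 0 \<le> p $ k} \<inter> {p. (\<Sum>k\<in>UNIV. p $ k) = 1}"
    by (auto simp: simplexK_def)
  have "closed (simplexK :: (real ^ 'k) set)" unfolding eq
    by (intro closed_Int closed_Collect_all closed_Collect_le closed_Collect_eq continuous_intros)
  moreover have "norm p \<le> 1" if "p \<in> simplexK" for p :: "real ^ 'k"
    using norm_le_l1_cart[of p] that by (simp add: simplexK_def)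
  then have "bounded (simplexK :: (real ^ 'k) set)" unfolding bounded_iff by blast
  ultimately show ?thesis by (simp add: compact_eq_bounded_closed)
qed

lemma simplexK_nonempty: "(simplexK :: (real ^ 'k::finite) set) \<noteq> {}"
proof -
  have "(\<chi> k. 1 / real CARD('k)) \<in> (simplexK :: (real ^ 'k) set)"
    by (simp add: simplexK_def)
  then show ?thesis by blast
qed

lemma simplex_interpolation:
  fixes x y :: "real ^ 'k::finite"
  assumes x: "x \<in> simplexK" and y: "y \<in> simplexK" and "x = y \<Longrightarrow> a = b"
  shows "\<exists>coef. (\<Sum>k\<in>UNIV. x $ k * coef k) = a \<and> (\<Sum>k\<in>UNIV. y $ k * coef k) = b"
proof (cases "x = y")
  case True
  then show ?thesis using assms x by (intro exI[of _ "\<lambda>_. a"]) (simp add: simplexK_def flip: sum_distrib_right)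
next
  case False
  then obtain k0 where k0: "x $ k0 \<noteq> y $ k0" by (auto simp: vec_eq_iff)
  define \<beta> where "\<beta> = (a - b) / (x $ k0 - y $ k0)"
  define \<alpha> where "\<alpha> = a - \<beta> * x $ k0"
  have affine: "(\<Sum>k\<in>UNIV. z $ k * (\<alpha> + (if k = k0 then \<beta> else 0))) = \<alpha> + \<beta> * z $ k0"
    if "z \<in> simplexK" for z :: "real ^ 'k"
  proof -
    have "(\<Sum>k\<in>UNIV. z $ k * (\<alpha> + (if k = k0 then \<beta> else 0)))
        = (\<Sum>k\<in>UNIV. \<alpha> * z $ k + (if k = k0 then \<beta> * z $ k else 0))"
      by (rule sum.cong) (auto simp: algebra_simps)
    also have "\<dots> = \<alpha> * (\<Sum>k\<in>UNIV. z $ k) + \<beta> * z $ k0"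
      by (simp add: sum.distrib sum_distrib_left)
    finally show ?thesis using that by (simp add: simplexK_def)
  qed
  have "\<beta> * (x $ k0 - y $ k0) = a - b" using k0 by (simp add: \<beta>_def)
  then have "\<alpha> + \<beta> * x $ k0 = a" "\<alpha> + \<beta> * y $ k0 = b"
    by (simp_all add: \<alpha>_def algebra_simps)
  then show ?thesis using affine[OF x] affine[OF y]
    by (intro exI[of _ "\<lambda>k. \<alpha> + (if k = k0 then \<beta> else 0)"]) simp
qed

theorem D0_span_dense:
  fixes u :: "real ^ 'k::finite \<Rightarrow> real"
  assumes "continuous_on simplexK u" "0 < e"
  shows "\<exists>h\<in>lin_span (D0 :: (real ^ 'k \<Rightarrow> real) set). \<forall>p\<in>simplexK. \<bar>u p - h p\<bar> < e"
proof -
  have "\<exists>f\<in>D0_cone. \<forall>p\<in>simplexK. \<bar>u p - f p\<bar> < e"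
  proof (rule lattice_approximation[OF compact_simplexK simplexK_nonempty _ D0_cone_max D0_cone_min _ assms])
    show "continuous_on simplexK f" if "f \<in> D0_cone" for f :: "real ^ 'k \<Rightarrow> real"
      using D0_coneE[OF that] by blast
    show "\<exists>f\<in>D0_cone. f x = a \<and> f y = b"
      if xy: "x \<in> simplexK" "y \<in> simplexK" "x = y \<Longrightarrow> a = b" for x y :: "real ^ 'k" and a b :: real
    proof -
      obtain coef where "(\<Sum>k\<in>UNIV. x $ k * coef k) = a" "(\<Sum>k\<in>UNIV. y $ k * coef k) = b"
        using simplex_interpolation[OF xy] by blast
      then show ?thesis using D0_cone_linear[of coef]
        by (intro bexI[of _ "\<lambda>p. \<Sum>k\<in>UNIV. p $ k * coef k"]) auto
    qed
  qed
  then obtain f where f: "f \<in> D0_cone" "\<forall>p\<in>simplexK. \<bar>u p - f p\<bar> < e" by blast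
  obtain c g where g: "g \<in> D0" "\<forall>p\<in>simplexK. f p = c * g p"
    using D0_coneE[OF f(1)] by blast
  have "(\<lambda>p. c * g p) \<in> lin_span D0"
    unfolding lin_span_def
    by (rule CollectI, rule exI[of _ 1], rule exI[of _ "\<lambda>_. c"], rule exI[of _ "\<lambda>_. g"]) (simp add: g(1))
  then show ?thesis using f(2) g(2) by (intro bexI[of _ "\<lambda>p. c * g p"]) auto
qed

theorem lemma2:
  fixes f g :: "real ^ 'k::finite \<Rightarrow> real" and lam :: real
  assumes "f \<in> D0" and "g \<in> D0" and "0 \<le> lam" and "lam \<le> 1"
  shows "(\<lambda>p. - f p) \<in> D0 \<and>
         (\<lambda>p. max (f p) (g p)) \<in> D0 \<and>
         (\<lambda>p. min (f p) (g p)) \<in> D0 \<and>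
         (\<lambda>p. lam * f p + (1 - lam) * g p) \<in> D0 \<and>
         (\<forall>u::real ^ 'k \<Rightarrow> real. continuous_on simplexK u \<longrightarrow>
           (\<forall>e>0. \<exists>h\<in>lin_span (D0 :: (real ^ 'k \<Rightarrow> real) set).
                     \<forall>p\<in>simplexK. \<bar>u p - h p\<bar> < e))"
proof (intro conjI allI impI)
  show "(\<lambda>p. - f p) \<in> D0" by (rule D0_neg[OF assms(1)])
  show "(\<lambda>p. max (f p) (g p)) \<in> D0" by (rule D0_max[OF assms(1,2)])
  show "(\<lambda>p. min (f p) (g p)) \<in> D0" by (rule D0_min[OF assms(1,2)])
  show "(\<lambda>p. lam * f p + (1 - lam) * g p) \<in> D0" using assms by (rule D0_convex)
  show "\<exists>h\<in>lin_span D0. \<forall>p\<in>simplexK. \<bar>u p - h p\<bar> < e"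
    if "continuous_on simplexK u" "0 < e" for u :: "real ^ 'k \<Rightarrow> real" and e :: real
    using that by (rule D0_span_dense)
qed

end
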